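(* Let $A$ be a finite Abelian group of order $n$, and let $G=\mathrm{Cay}(A,S)$ be a Cayley graph on $A$ of degree $r=|S|$. (a) If $\gcd(n,r)=1$, then every group automorphism of $A$, viewed as a bijection $V(G)=A\to A$, is an $A$-distance antimagic labelling of $G$; in particular $G$ is $A$-distance antimagic. (b) If $\exp(A)$ divides $r$, then every group automorphism $f$ of $A$ is an $A$-distance magic labelling of $G$ with magic constant $\sum_{s\in S} f(s)$; in particular $G$ is $A$-distance magic.
   Context: For an Abelian group $A$ and $S\subseteq A\setminus\{0\}$ with $S=-S$, the Cayley graph $\mathrm{Cay}(A,S)$ has vertex set $A$, with $x,y$ adjacent iff $x-y\in S$. $\exp(A)$ is the least positive integer $m$ with $mx=0$ for all $x\in A$. For a graph $G$ with $n$ vertices and an Abelian group $A$ of order $n$ (written additively), and a bijection $f:V(G)\to A$, the weight of $x$ is $w_f(x)=\sum_{y\in N(x)} f(y)$ computed in $A$ ($N(x)$ the open neighbourhood). $f$ is an $A$-distance antimagic labelling if all weights are pairwise distinct, and an $A$-distance magic labelling if all weights are equal (the common value is the magic constant). $G$ is $A$-distance antimagic (resp. magic) if it admits such a labelling. *)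

theory Defs
  imports Main
begin

primrec nsmul :: "nat \<Rightarrow> 'a::ab_group_add \<Rightarrow> 'a" where
  "nsmul 0 x = 0"
| "nsmul (Suc m) x = x + nsmul m x"

definition group_exp :: "'a::{ab_group_add,finite} itself \<Rightarrow> nat" where
  "group_exp _ = (LEAST m. 0 < m \<and> (\<forall>x::'a. nsmul m x = 0))"

definition group_aut :: "('a::ab_group_add \<Rightarrow> 'a) \<Rightarrow> bool" where
  "group_aut f \<longleftrightarrow> bij f \<and> (\<forall>x y. f (x + y) = f x + f y)"

definition cayley_adj :: "'a::ab_group_add set \<Rightarrow> 'a \<Rightarrow> 'a \<Rightarrow> bool" where
  "cayley_adj S x y \<longleftrightarrow> x - y \<in> S"

definition nbhd :: "'v set \<Rightarrow> ('v \<Rightarrow> 'v \<Rightarrow> bool) \<Rightarrow> 'v \<Rightarrow> 'v set" where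
  "nbhd V adj x = {y \<in> V. adj x y}"

definition weight :: "'v set \<Rightarrow> ('v \<Rightarrow> 'v \<Rightarrow> bool) \<Rightarrow> ('v \<Rightarrow> 'a::comm_monoid_add) \<Rightarrow> 'v \<Rightarrow> 'a" where
  "weight V adj f x = (\<Sum>y\<in>nbhd V adj x. f y)"

definition dist_antimagic_labelling ::
  "'v set \<Rightarrow> ('v \<Rightarrow> 'v \<Rightarrow> bool) \<Rightarrow> ('v \<Rightarrow> 'a::{ab_group_add,finite}) \<Rightarrow> bool" where
  "dist_antimagic_labelling V adj f \<longleftrightarrow>
     bij_betw f V (UNIV :: 'a set) \<and> inj_on (weight V adj f) V"

definition dist_magic_labelling ::
  "'v set \<Rightarrow> ('v \<Rightarrow> 'v \<Rightarrow> bool) \<Rightarrow> ('v \<Rightarrow> 'a::{ab_group_add,finite}) \<Rightarrow> 'a \<Rightarrow> bool" where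
  "dist_magic_labelling V adj f c \<longleftrightarrow>
     bij_betw f V (UNIV :: 'a set) \<and> (\<forall>x\<in>V. weight V adj f x = c)"

definition is_dist_antimagic ::
  "'a::{ab_group_add,finite} itself \<Rightarrow> 'v set \<Rightarrow> ('v \<Rightarrow> 'v \<Rightarrow> bool) \<Rightarrow> bool" where
  "is_dist_antimagic _ V adj \<longleftrightarrow> (\<exists>f :: 'v \<Rightarrow> 'a. dist_antimagic_labelling V adj f)"

definition is_dist_magic ::
  "'a::{ab_group_add,finite} itself \<Rightarrow> 'v set \<Rightarrow> ('v \<Rightarrow> 'v \<Rightarrow> bool) \<Rightarrow> bool" where
  "is_dist_magic _ V adj \<longleftrightarrow> (\<exists>(f :: 'v \<Rightarrow> 'a) c. dist_magic_labelling V adj f c)"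

end

theory Submission
  imports Defs
begin

text \<open>For a group automorphism \<open>f\<close>, the neighbourhood of \<open>x\<close> in \<open>Cay(A,S)\<close> is \<open>x - S\<close>,
  so the weight of \<open>x\<close> is \<open>r f(x) - \<Sum>\<^sub>s\<^sub>\<in>\<^sub>S f(s)\<close>. Since \<open>n x = 0\<close> for all \<open>x\<close>, multiplication
  by \<open>r\<close> is injective when \<open>gcd(n,r) = 1\<close>, which makes the weights pairwise distinct.
  When \<open>exp(A)\<close> divides \<open>r\<close> the term \<open>r f(x)\<close> vanishes, and \<open>S = -S\<close> forces
  \<open>\<Sum>\<^sub>s\<^sub>\<in>\<^sub>S f(s) = -\<Sum>\<^sub>s\<^sub>\<in>\<^sub>S f(s)\<close>, so every weight equals \<open>\<Sum>\<^sub>s\<^sub>\<in>\<^sub>S f(s)\<close>.\<close>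

lemma nsmul_add: "nsmul (a + b) x = nsmul a x + nsmul b (x::'a::ab_group_add)"
  by (induction a) (auto simp: add.assoc)

lemma nsmul_mult: "nsmul (a * b) x = nsmul a (nsmul b (x::'a::ab_group_add))"
  by (induction a) (auto simp: nsmul_add)

lemma nsmul_zero [simp]: "nsmul a (0::'a::ab_group_add) = 0"
  by (induction a) auto

lemma nsmul_diff: "nsmul a (x - y) = nsmul a x - nsmul a (y::'a::ab_group_add)"
  by (induction a) (auto simp: algebra_simps)

lemma sum_constant_nsmul: "finite A \<Longrightarrow> (\<Sum>_\<in>A. c) = nsmul (card A) (c::'a::ab_group_add)"
  by (induction A rule: finite_induct) auto

text \<open>Translating the sum of all elements by \<open>z\<close> adds \<open>n z\<close> but leaves it unchanged.\<close>
lemma nsmul_card_UNIV: "nsmul (card (UNIV::'a::{ab_group_add,finite} set)) (z::'a) = 0"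
proof -
  have "(\<Sum>x\<in>(UNIV::'a set). x + z) = (\<Sum>x\<in>UNIV. x)"
    by (rule sum.reindex_bij_witness[of _ "\<lambda>x. x - z" "\<lambda>x. x + z"]) auto
  then show ?thesis by (simp add: sum.distrib sum_constant_nsmul)
qed

lemma nsmul_group_exp: "nsmul (group_exp TYPE('a)) (x::'a::{ab_group_add,finite}) = 0"
proof -
  have "0 < card (UNIV::'a set) \<and> (\<forall>x::'a. nsmul (card (UNIV::'a set)) x = 0)"
    using nsmul_card_UNIV[where ?'a='a] finite_UNIV_card_ge_0[where ?'a='a] by simp
  then have "\<forall>x::'a. nsmul (group_exp TYPE('a)) x = 0"
    unfolding group_exp_def by (rule LeastI2_ex[OF exI]) blast
  then show ?thesis ..
qed

lemma nsmul_eq_0_if_group_exp_dvd: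
  assumes "group_exp TYPE('a) dvd m"
  shows "nsmul m (x::'a::{ab_group_add,finite}) = 0"
proof -
  obtain k where "m = k * group_exp TYPE('a)" using assms by (metis dvdE mult.commute)
  then show ?thesis by (simp add: nsmul_mult nsmul_group_exp)
qed

lemma nsmul_eq_0_imp_eq_0_if_coprime:
  assumes "coprime (card (UNIV::'a::{ab_group_add,finite} set)) m" and "nsmul m (z::'a) = 0"
  shows "z = 0"
proof -
  let ?n = "card (UNIV::'a set)"
  obtain a b where "?n * a = m * b + gcd ?n m" using bezout_nat[of ?n m] by auto
  with assms(1) have "nsmul (?n * a) z = nsmul (m * b) z + z" by (simp add: nsmul_add)
  moreover have "nsmul (?n * a) z = 0" by (simp add: mult.commute[of ?n] nsmul_mult nsmul_card_UNIV)
  moreover have "nsmul (m * b) z = 0" by (simp add: mult.commute[of m] nsmul_mult assms(2))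
  ultimately show ?thesis by simp
qed

lemma group_aut_id: "group_aut id"
  unfolding group_aut_def by auto

lemma group_aut_inj: "group_aut f \<Longrightarrow> inj f"
  unfolding group_aut_def by (simp add: bij_is_inj)

lemma group_aut_diff:
  assumes "group_aut f"
  shows "f (x - y) = f x - f y"
proof -
  have "f (x - y) + f y = f x" using assms unfolding group_aut_def by (metis diff_add_cancel)
  then show ?thesis by (metis add_diff_cancel)
qed

lemma group_aut_minus: "group_aut f \<Longrightarrow> f (- x) = - f x"
  using group_aut_diff[of f 0 x] group_aut_diff[of f 0 0] by simp

lemma sum_eq_uminus_sum_if_symmetric:
  fixes S :: "'a::ab_group_add set"
  assumes "group_aut f" and "uminus ` S = S"
  shows "(\<Sum>s\<in>S. f s) = - (\<Sum>s\<in>S. f s)"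
proof -
  have "(\<Sum>s\<in>S. f s) = (\<Sum>s\<in>uminus ` S. f s)" using assms(2) by simp
  also have "\<dots> = (\<Sum>s\<in>S. - f s)"
    by (simp add: sum.reindex inj_on_def group_aut_minus[OF assms(1)])
  also have "\<dots> = - (\<Sum>s\<in>S. f s)" by (simp add: sum_negf)
  finally show ?thesis .
qed

lemma nbhd_cayley_adj: "nbhd UNIV (cayley_adj S) x = (\<lambda>s. x - s) ` S"
  unfolding nbhd_def cayley_adj_def by force

lemma weight_cayley_adj_group_aut:
  fixes S :: "'a::{ab_group_add,finite} set"
  assumes "group_aut f"
  shows "weight UNIV (cayley_adj S) f x = nsmul (card S) (f x) - (\<Sum>s\<in>S. f s)"
proof -
  have "inj_on (\<lambda>s. x - s) S" by (auto simp: inj_on_def)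
  then have "weight UNIV (cayley_adj S) f x = (\<Sum>s\<in>S. f (x - s))"
    unfolding weight_def nbhd_cayley_adj by (simp add: sum.reindex)
  also have "\<dots> = (\<Sum>s\<in>S. f x - f s)" using group_aut_diff[OF assms] by simp
  also have "\<dots> = nsmul (card S) (f x) - (\<Sum>s\<in>S. f s)"
    by (simp add: sum_subtractf sum_constant_nsmul)
  finally show ?thesis .
qed

lemma group_aut_dist_antimagic_labelling:
  fixes S :: "'a::{ab_group_add,finite} set"
  assumes "coprime (card (UNIV :: 'a set)) (card S)" and f: "group_aut f"
  shows "dist_antimagic_labelling UNIV (cayley_adj S) f"
proof -
  have "inj (weight UNIV (cayley_adj S) f)"
  proof (rule injI)
    fix x y assume "weight UNIV (cayley_adj S) f x = weight UNIV (cayley_adj S) f y"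
    then have "nsmul (card S) (f x - f y) = 0"
      by (simp add: weight_cayley_adj_group_aut[OF f] nsmul_diff)
    then have "f x = f y" using nsmul_eq_0_imp_eq_0_if_coprime[OF assms(1)] by fastforce
    with group_aut_inj[OF f] show "x = y" by (rule injD)
  qed
  then show ?thesis using f unfolding dist_antimagic_labelling_def group_aut_def by simp
qed

lemma group_aut_dist_magic_labelling:
  fixes S :: "'a::{ab_group_add,finite} set"
  assumes "group_exp TYPE('a) dvd card S" and "uminus ` S = S" and f: "group_aut f"
  shows "dist_magic_labelling UNIV (cayley_adj S) f (\<Sum>s\<in>S. f s)"
proof -
  have "weight UNIV (cayley_adj S) f x = (\<Sum>s\<in>S. f s)" for x
    using sum_eq_uminus_sum_if_symmetric[OF f assms(2)]
    by (simp add: weight_cayley_adj_group_aut[OF f] nsmul_eq_0_if_group_exp_dvd[OF assms(1)])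
  then show ?thesis using f unfolding dist_magic_labelling_def group_aut_def by simp
qed

theorem mainTheorem2:
  fixes S :: "'a::{ab_group_add,finite} set"
  assumes "0 \<notin> S" and "uminus ` S = S"
  defines "n \<equiv> card (UNIV :: 'a set)" and "r \<equiv> card S"
  shows "(coprime n r \<longrightarrow>
            (\<forall>f::'a \<Rightarrow> 'a. group_aut f \<longrightarrow> dist_antimagic_labelling UNIV (cayley_adj S) f)
            \<and> is_dist_antimagic TYPE('a) UNIV (cayley_adj S))
       \<and> (group_exp TYPE('a) dvd r \<longrightarrow>
            (\<forall>f::'a \<Rightarrow> 'a. group_aut f \<longrightarrow>
                dist_magic_labelling UNIV (cayley_adj S) f (\<Sum>s\<in>S. f s))
            \<and> is_dist_magic TYPE('a) UNIV (cayley_adj S))"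
  using group_aut_dist_antimagic_labelling[of S] group_aut_dist_magic_labelling[of S]
    group_aut_id assms(2)
  unfolding n_def r_def is_dist_antimagic_def is_dist_magic_def by blast

end
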